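(* Let $d\ge1$, $d'=1$, $t_f>0$, and let $A:\mathbb{R}^d\to(0,\infty)$ be $C^3$ with $A(r)\ge C^{-1}$ for all $r$. For each $\varepsilon>0$ let $r_\varepsilon:[0,t_f]\to\mathbb{R}^d$ be $C^3$ (the atomic trajectory of the XLMD system described in the context) with $|r_\varepsilon|,|\dot r_\varepsilon|,|\ddot r_\varepsilon|\le C$ on $[0,t_f]$ uniformly in $\varepsilon$. Let $k_\varepsilon(t)=A(r_\varepsilon(t))^{1/2}$ and $\kappa_\varepsilon(t)=\int_0^tk_\varepsilon(\tau)\,d\tau$. For $s\in[0,t_f]$, $\xi_0\in\mathbb{R}$, let $\Phi^{s,t}_\varepsilon(0,\xi_0)=(\tilde y_\varepsilon(t),\dot{\tilde y}_\varepsilon(t))$, $t\ge s$, where $\tilde y_\varepsilon$ solves $\varepsilon\ddot{\tilde y}_\varepsilon=-A(r_\varepsilon(t))\tilde y_\varepsilon$, $\tilde y_\varepsilon(s)=0$, $\dot{\tilde y}_\varepsilon(s)=\xi_0$. Then $$\Phi^{s,t}_\varepsilon(0,\xi_0)=\begin{pmatrix}\varepsilon^{1/2}k_\varepsilon(t)^{-1/2}k_\varepsilon(s)^{-1/2}\sin\!\Big(\frac{\kappa_\varepsilon(t)-\kappa_\varepsilon(s)}{\sqrt\varepsilon}\Big)\xi_0\\ k_\varepsilon(t)^{1/2}k_\varepsilon(s)^{-1/2}\cos\!\Big(\frac{\kappa_\varepsilon(t)-\kappa_\varepsilon(s)}{\sqrt\varepsilon}\Big)\xi_0\end{pmatrix}+\begin{pmatrix}\mathcal{O}(\varepsilon)\\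 \mathcal{O}(\varepsilon^{1/2})\end{pmatrix}$$ as $\varepsilon\to0$, for $0\le s\le t\le t_f$.
   Context: In the paper $r_\varepsilon$ is the atomic component of the solution of the XLMD system $\ddot r_\varepsilon=F(r_\varepsilon)-\frac{\partial Q}{\partial r}(r_\varepsilon,x_\varepsilon)$, $\varepsilon\ddot x_\varepsilon=b(r_\varepsilon)-A(r_\varepsilon)x_\varepsilon$ with $Q(r,x)=\tfrac12A(r)x^2-b(r)x$; only the stated regularity and $\varepsilon$-uniform bounds are used. The $\mathcal{O}$ constants are independent of $\varepsilon$ (and of $s,t\in[0,t_f]$). *)

theory Defs
  imports "HOL-Analysis.Analysis"
begin

definition C3 :: "('a::euclidean_space \<Rightarrow> real) \<Rightarrow> bool" where
  "C3 f \<longleftrightarrow> (\<exists>(f1 :: 'a \<Rightarrow> ('a \<Rightarrow>\<^sub>L real))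
                 (f2 :: 'a \<Rightarrow> ('a \<Rightarrow>\<^sub>L ('a \<Rightarrow>\<^sub>L real)))
                 (f3 :: 'a \<Rightarrow> ('a \<Rightarrow>\<^sub>L ('a \<Rightarrow>\<^sub>L ('a \<Rightarrow>\<^sub>L real)))).
      (\<forall>x. (f has_derivative blinfun_apply (f1 x)) (at x)) \<and>
      (\<forall>x. (f1 has_derivative blinfun_apply (f2 x)) (at x)) \<and>
      (\<forall>x. (f2 has_derivative blinfun_apply (f3 x)) (at x)) \<and>
      continuous_on UNIV f3)"

definition kfun :: "('a \<Rightarrow> real) \<Rightarrow> (real \<Rightarrow> real \<Rightarrow> 'a) \<Rightarrow> real \<Rightarrow> real \<Rightarrow> real" where
  "kfun A r \<epsilon> t = sqrt (A (r \<epsilon> t))"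

definition kappa :: "('a \<Rightarrow> real) \<Rightarrow> (real \<Rightarrow> real \<Rightarrow> 'a) \<Rightarrow> real \<Rightarrow> real \<Rightarrow> real" where
  "kappa A r \<epsilon> t = integral {0..t} (kfun A r \<epsilon>)"

end

theory Submission
  imports Defs
begin

(* Write a = A o r. The phase theta' = sqrt a / sqrt eps and the amplitude
   a^(-1/4) make Y = sqrt eps a^(-1/4) sin theta solve eps Y'' = -a Y up to a residual of
   order eps^(3/2), because the O(1) terms of Y'' cancel exactly
   ((a^(1/4))' = -(a^(-1/4))' sqrt a). The error e = y - c Y, with c chosen to match the
   initial data, solves the forced equation eps e'' = -a e - R with zero initial data.
   Its energy a e^2 + eps e'^2 then obeys a linear differential inequality, so Gronwall bounds
   it by O(eps^2), and this gives |e| = O(eps) and |e'| = O(sqrt eps). The constants depend only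
   on lower and derivative bounds for a. These follow from the C^2 bounds of A on the ball of
   radius C that contains the trajectory. *)

lemma linear_differential_inequality_bound:
  fixes E E' :: "real \<Rightarrow> real"
  assumes "s \<le> t" and "L \<ge> 0" and "c \<ge> 0"
    and E': "\<And>u. u \<in> {s..t} \<Longrightarrow> (E has_real_derivative E' u) (at u within {s..t})"
    and E'_le: "\<And>u. u \<in> {s..t} \<Longrightarrow> E' u \<le> L * E u + c"
  shows "E t \<le> (E s + c * (t - s)) * exp (L * (t - s))"
proof -
  define G where "G u = E u * exp (- L * (u - s)) - c * (u - s)" for u
  have G': "(G has_real_derivative (E' u - L * E u) * exp (- L * (u - s)) - c) (at u within {s..t})"
    if "u \<in> {s..t}" for u
    unfolding G_def using E'[OF that] by (auto intro!: derivative_eq_intros simp: algebra_simps)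
  have G'_nonpos: "(E' u - L * E u) * exp (- L * (u - s)) - c \<le> 0" if "u \<in> {s..t}" for u
  proof -
    have "exp (- L * (u - s)) \<le> 1" using that \<open>L \<ge> 0\<close> by simp
    then have "(E' u - L * E u) * exp (- L * (u - s)) \<le> c * 1"
      using E'_le[OF that] \<open>c \<ge> 0\<close> by (intro mult_mono) auto
    then show ?thesis by simp
  qed
  have "G t \<le> G s"
  proof (rule DERIV_nonpos_imp_decreasing_open[OF \<open>s \<le> t\<close>])
    fix u assume "s < u" "u < t"
    then have "at u within {s..t} = at u" by (intro at_within_Icc_at) auto
    moreover have "u \<in> {s..t}" using \<open>s < u\<close> \<open>u < t\<close> by simp
    ultimately show "\<exists>y. DERIV G u :> y \<and> y \<le> 0" using G' G'_nonpos by metis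
  qed (rule DERIV_continuous_on[OF G'])
  then have "E t * exp (- L * (t - s)) \<le> E s + c * (t - s)" unfolding G_def by simp
  then have "E t * exp (- L * (t - s)) * exp (L * (t - s))
      \<le> (E s + c * (t - s)) * exp (L * (t - s))"
    by (rule mult_right_mono) simp
  then show ?thesis by (simp add: mult.assoc flip: exp_add)
qed

lemma forced_oscillator_energy_bound:
  fixes a a' e e' R :: "real \<Rightarrow> real"
  assumes "\<epsilon> > 0" and "m > 0" and "s \<le> t"
    and a': "\<And>u. u \<in> {s..t} \<Longrightarrow> (a has_real_derivative a' u) (at u within {s..t})"
    and e': "\<And>u. u \<in> {s..t} \<Longrightarrow> (e has_real_derivative e' u) (at u within {s..t})"
    and e'': "\<And>u. u \<in> {s..t} \<Longrightarrow>
                (e' has_real_derivative - (a u * e u + R u) / \<epsilon>) (at u within {s..t})"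
    and a_ge: "\<And>u. u \<in> {s..t} \<Longrightarrow> m \<le> a u"
    and a'_le: "\<And>u. u \<in> {s..t} \<Longrightarrow> \<bar>a' u\<bar> \<le> B1"
    and R_le: "\<And>u. u \<in> {s..t} \<Longrightarrow> \<bar>R u\<bar> \<le> \<rho>"
    and "e s = 0" and "e' s = 0"
  shows "a t * (e t)\<^sup>2 + \<epsilon> * (e' t)\<^sup>2 \<le> \<rho>\<^sup>2 / \<epsilon> * (t - s) * exp ((B1 / m + 1) * (t - s))"
proof -
  define E where "E u = a u * (e u)\<^sup>2 + \<epsilon> * (e' u)\<^sup>2" for u
  have "B1 \<ge> 0" using a'_le[of s] \<open>s \<le> t\<close> by force
  have E': "(E has_real_derivative a' u * (e u)\<^sup>2 - 2 * e' u * R u) (at u within {s..t})"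
    if "u \<in> {s..t}" for u
    unfolding E_def using a'[OF that] e'[OF that] e''[OF that] \<open>\<epsilon> > 0\<close>
    by (auto intro!: derivative_eq_intros simp: field_simps power2_eq_square)
  have E'_le: "a' u * (e u)\<^sup>2 - 2 * e' u * R u \<le> (B1 / m + 1) * E u + \<rho>\<^sup>2 / \<epsilon>"
    if u: "u \<in> {s..t}" for u
  proof -
    have "a' u * (e u)\<^sup>2 \<le> B1 / m * (m * (e u)\<^sup>2)"
      using a'_le[OF u] \<open>m > 0\<close> by (simp add: mult_right_mono)
    also have "\<dots> \<le> B1 / m * (a u * (e u)\<^sup>2)"
      using a_ge[OF u] \<open>m > 0\<close> \<open>B1 \<ge> 0\<close> by (intro mult_left_mono mult_right_mono) auto
    finally have "a' u * (e u)\<^sup>2 \<le> B1 / m * (a u * (e u)\<^sup>2)" .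
    moreover have "- (2 * e' u * R u) \<le> \<epsilon> * (e' u)\<^sup>2 + (R u)\<^sup>2 / \<epsilon>"
    proof -
      have "0 \<le> (\<epsilon> * e' u + R u)\<^sup>2 / \<epsilon>" using \<open>\<epsilon> > 0\<close> by simp
      also have "\<dots> = \<epsilon> * (e' u)\<^sup>2 + 2 * e' u * R u + (R u)\<^sup>2 / \<epsilon>"
        using \<open>\<epsilon> > 0\<close> by (simp add: field_simps power2_eq_square)
      finally show ?thesis by linarith
    qed
    moreover have "(R u)\<^sup>2 \<le> \<rho>\<^sup>2"
      using R_le[OF u] by (simp add: abs_le_square_iff[symmetric])
    then have "(R u)\<^sup>2 / \<epsilon> \<le> \<rho>\<^sup>2 / \<epsilon>" using \<open>\<epsilon> > 0\<close> by (simp add: divide_right_mono)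
    moreover have "0 \<le> B1 / m * (\<epsilon> * (e' u)\<^sup>2)" "0 \<le> a u * (e u)\<^sup>2"
      using \<open>B1 \<ge> 0\<close> \<open>m > 0\<close> \<open>\<epsilon> > 0\<close> a_ge[OF u] by simp_all
    moreover have "(B1 / m + 1) * E u + \<rho>\<^sup>2 / \<epsilon> = B1 / m * (a u * (e u)\<^sup>2)
        + B1 / m * (\<epsilon> * (e' u)\<^sup>2) + a u * (e u)\<^sup>2 + \<epsilon> * (e' u)\<^sup>2 + \<rho>\<^sup>2 / \<epsilon>"
      unfolding E_def by (simp add: algebra_simps)
    ultimately show ?thesis by linarith
  qed
  have "E t \<le> (E s + \<rho>\<^sup>2 / \<epsilon> * (t - s)) * exp ((B1 / m + 1) * (t - s))"
    by (rule linear_differential_inequality_bound[OF \<open>s \<le> t\<close> _ _ E' E'_le])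
      (use \<open>B1 \<ge> 0\<close> \<open>m > 0\<close> \<open>\<epsilon> > 0\<close> in auto)
  then show ?thesis unfolding E_def using \<open>e s = 0\<close> \<open>e' s = 0\<close> by simp
qed

(* Intended for the amplitudes p = a^(-1/4) and q = a^(1/4); apart from the derivatives of p,
   only q' = -p' sqrt a and the identities pq, qa are used. *)
lemma wkb_ansatz_has_derivative:
  fixes a p p' p'' q \<theta> :: "real \<Rightarrow> real"
  assumes "\<epsilon> > 0"
    and p': "(p has_real_derivative p' u) (at u within S)"
    and p'': "(p' has_real_derivative p'' u) (at u within S)"
    and q': "(q has_real_derivative - p' u * sqrt (a u)) (at u within S)"
    and \<theta>': "(\<theta> has_real_derivative sqrt (a u) / sqrt \<epsilon>) (at u within S)"
    and pq: "p u * sqrt (a u) = q u" and qa: "q u * sqrt (a u) = a u * p u"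
  shows "((\<lambda>v. sqrt \<epsilon> * p v * sin (\<theta> v)) has_real_derivative
            sqrt \<epsilon> * p' u * sin (\<theta> u) + q u * cos (\<theta> u)) (at u within S)"
    and "((\<lambda>v. sqrt \<epsilon> * p' v * sin (\<theta> v) + q v * cos (\<theta> v)) has_real_derivative
            (\<epsilon> * sqrt \<epsilon> * p'' u * sin (\<theta> u) - a u * (sqrt \<epsilon> * p u * sin (\<theta> u))) / \<epsilon>)
          (at u within S)"
proof -
  have \<epsilon>: "sqrt \<epsilon> > 0" "sqrt \<epsilon> * sqrt \<epsilon> = \<epsilon>" using \<open>\<epsilon> > 0\<close> by auto
  show "((\<lambda>v. sqrt \<epsilon> * p v * sin (\<theta> v)) has_real_derivative
            sqrt \<epsilon> * p' u * sin (\<theta> u) + q u * cos (\<theta> u)) (at u within S)"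
    using p' \<theta>' \<epsilon> by (auto intro!: derivative_eq_intros simp flip: pq)
  show "((\<lambda>v. sqrt \<epsilon> * p' v * sin (\<theta> v) + q v * cos (\<theta> v)) has_real_derivative
            (\<epsilon> * sqrt \<epsilon> * p'' u * sin (\<theta> u) - a u * (sqrt \<epsilon> * p u * sin (\<theta> u))) / \<epsilon>)
          (at u within S)"
    using p'' q' \<theta>' \<epsilon> by (auto intro!: derivative_eq_intros simp: field_simps simp flip: qa)
qed

lemma quarter_power_amplitude:
  fixes a a' a'' :: "real \<Rightarrow> real"
  assumes "a u > 0"
    and a': "(a has_real_derivative a' u) (at u within S)"
    and a'': "(a' has_real_derivative a'' u) (at u within S)"
  shows "((\<lambda>v. a v powr (-1/4)) has_real_derivative - a' u * a u powr (-5/4) / 4) (at u within S)"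
    and "((\<lambda>v. - a' v * a v powr (-5/4) / 4) has_real_derivative
            5/16 * (a' u)\<^sup>2 * a u powr (-9/4) - a'' u * a u powr (-5/4) / 4) (at u within S)"
    and "((\<lambda>v. a v powr (1/4)) has_real_derivative - (- a' u * a u powr (-5/4) / 4) * sqrt (a u))
           (at u within S)"
    and "a u powr (-1/4) * sqrt (a u) = a u powr (1/4)"
    and "a u powr (1/4) * sqrt (a u) = a u * a u powr (-1/4)"
proof -
  have sqrt_powr: "sqrt (a u) = a u powr (1/2)" using assms by (simp add: powr_half_sqrt)
  show "((\<lambda>v. a v powr (-1/4)) has_real_derivative - a' u * a u powr (-5/4) / 4) (at u within S)"
    using a' \<open>a u > 0\<close> by (auto intro!: derivative_eq_intros)
  show "((\<lambda>v. - a' v * a v powr (-5/4) / 4) has_real_derivative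
            5/16 * (a' u)\<^sup>2 * a u powr (-9/4) - a'' u * a u powr (-5/4) / 4) (at u within S)"
    using a' a'' \<open>a u > 0\<close> by (auto intro!: derivative_eq_intros simp: field_simps power2_eq_square)
  have "((\<lambda>v. a v powr (1/4)) has_real_derivative a' u * a u powr (-3/4) / 4) (at u within S)"
    using a' \<open>a u > 0\<close> by (auto intro!: derivative_eq_intros)
  moreover have "a u powr (-5/4) * sqrt (a u) = a u powr (-3/4)"
    unfolding sqrt_powr by (simp flip: powr_add)
  ultimately show "((\<lambda>v. a v powr (1/4)) has_real_derivative
      - (- a' u * a u powr (-5/4) / 4) * sqrt (a u)) (at u within S)"
    by (simp add: mult.assoc)
  show "a u powr (-1/4) * sqrt (a u) = a u powr (1/4)"
    unfolding sqrt_powr by (simp flip: powr_add)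
  show "a u powr (1/4) * sqrt (a u) = a u * a u powr (-1/4)"
    unfolding sqrt_powr using \<open>a u > 0\<close> by (simp add: powr_mult_base flip: powr_add)
qed

definition amplitude_deriv2_bound :: "real \<Rightarrow> real \<Rightarrow> real \<Rightarrow> real" where
  "amplitude_deriv2_bound m B1 B2 = 5/16 * B1\<^sup>2 * m powr (-9/4) + B2 * m powr (-5/4) / 4"

lemma quarter_power_amplitude_bounds:
  fixes x x' x'' :: real
  assumes "0 < m" "m \<le> x" "\<bar>x'\<bar> \<le> B1" "\<bar>x''\<bar> \<le> B2"
  shows "x powr (-1/4) \<le> m powr (-1/4)"
    and "\<bar>- x' * x powr (-5/4) / 4\<bar> \<le> B1 * m powr (-5/4) / 4"
    and "\<bar>5/16 * x'\<^sup>2 * x powr (-9/4) - x'' * x powr (-5/4) / 4\<bar> \<le> amplitude_deriv2_bound m B1 B2"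
proof -
  have mono: "x powr r \<le> m powr r" if "r \<le> 0" for r
    using powr_mono2'[OF that \<open>0 < m\<close> \<open>m \<le> x\<close>] .
  show "x powr (-1/4) \<le> m powr (-1/4)" by (rule mono) simp
  show "\<bar>- x' * x powr (-5/4) / 4\<bar> \<le> B1 * m powr (-5/4) / 4"
    using mono[of "-5/4"] assms(3) by (simp add: abs_mult mult_mono)
  have "x'\<^sup>2 \<le> B1\<^sup>2" using power_mono[OF assms(3) abs_ge_zero, of 2] by simp
  have "\<bar>5/16 * x'\<^sup>2 * x powr (-9/4) - x'' * x powr (-5/4) / 4\<bar>
        \<le> 5/16 * x'\<^sup>2 * x powr (-9/4) + \<bar>x''\<bar> * x powr (-5/4) / 4"
    by (rule order.trans[OF abs_triangle_ineq4]) (simp add: abs_mult)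
  also have "\<dots> \<le> 5/16 * B1\<^sup>2 * m powr (-9/4) + B2 * m powr (-5/4) / 4"
  proof (rule add_mono)
    show "5/16 * x'\<^sup>2 * x powr (-9/4) \<le> 5/16 * B1\<^sup>2 * m powr (-9/4)"
      using \<open>x'\<^sup>2 \<le> B1\<^sup>2\<close> mono[of "-9/4"] by (intro mult_mono mult_left_mono) auto
    have "0 \<le> B2" using assms(4) abs_ge_zero order_trans by blast
    then show "\<bar>x''\<bar> * x powr (-5/4) / 4 \<le> B2 * m powr (-5/4) / 4"
      using assms(4) mono[of "-5/4"] by (intro divide_right_mono mult_mono) auto
  qed
  finally show "\<bar>5/16 * x'\<^sup>2 * x powr (-9/4) - x'' * x powr (-5/4) / 4\<bar>
      \<le> amplitude_deriv2_bound m B1 B2"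
    unfolding amplitude_deriv2_bound_def .
qed

lemma wkb_error_energy_bound:
  fixes a a' a'' \<theta> y y' :: "real \<Rightarrow> real"
  assumes "\<epsilon> > 0" and "m > 0" and "s \<le> t"
    and a': "\<And>u. u \<in> {s..t} \<Longrightarrow> (a has_real_derivative a' u) (at u within {s..t})"
    and a'': "\<And>u. u \<in> {s..t} \<Longrightarrow> (a' has_real_derivative a'' u) (at u within {s..t})"
    and \<theta>': "\<And>u. u \<in> {s..t} \<Longrightarrow> (\<theta> has_real_derivative sqrt (a u) / sqrt \<epsilon>) (at u within {s..t})"
    and y': "\<And>u. u \<in> {s..t} \<Longrightarrow> (y has_real_derivative y' u) (at u within {s..t})"
    and y'': "\<And>u. u \<in> {s..t} \<Longrightarrow> (y' has_real_derivative - a u * y u / \<epsilon>) (at u within {s..t})"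
    and a_ge: "\<And>u. u \<in> {s..t} \<Longrightarrow> m \<le> a u"
    and a'_le: "\<And>u. u \<in> {s..t} \<Longrightarrow> \<bar>a' u\<bar> \<le> B1"
    and a''_le: "\<And>u. u \<in> {s..t} \<Longrightarrow> \<bar>a'' u\<bar> \<le> B2"
    and "\<theta> s = 0" and "y s = 0" and "y' s = \<xi>"
  defines "c \<equiv> \<xi> * a s powr (-1/4)"
    and "Y \<equiv> \<lambda>v. sqrt \<epsilon> * a v powr (-1/4) * sin (\<theta> v)"
    and "Z \<equiv> \<lambda>v. sqrt \<epsilon> * (- a' v * a v powr (-5/4) / 4) * sin (\<theta> v) + a v powr (1/4) * cos (\<theta> v)"
  shows "a t * (y t - c * Y t)\<^sup>2 + \<epsilon> * (y' t - c * Z t)\<^sup>2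
         \<le> (\<epsilon> * \<bar>c\<bar> * amplitude_deriv2_bound m B1 B2)\<^sup>2 * (t - s) * exp ((B1 / m + 1) * (t - s))"
proof -
  define p'' where "p'' v = 5/16 * (a' v)\<^sup>2 * a v powr (-9/4) - a'' v * a v powr (-5/4) / 4" for v
  define \<rho> where "\<rho> = \<epsilon> * sqrt \<epsilon> * \<bar>c\<bar> * amplitude_deriv2_bound m B1 B2"
  have ansatz: "(Y has_real_derivative Z u) (at u within {s..t}) \<and>
      (Z has_real_derivative (\<epsilon> * sqrt \<epsilon> * p'' u * sin (\<theta> u) - a u * Y u) / \<epsilon>) (at u within {s..t})"
    if u: "u \<in> {s..t}" for u
  proof -
    have "a u > 0" using a_ge[OF u] \<open>m > 0\<close> by linarith
    note amp = quarter_power_amplitude[where a = a and a' = a' and a'' = a'' and u = u,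
        OF this a'[OF u] a''[OF u]]
    show ?thesis
      using wkb_ansatz_has_derivative[where a = a and \<theta> = \<theta> and u = u and p'' = p''
          and p = "\<lambda>v. a v powr (-1/4)" and p' = "\<lambda>v. - a' v * a v powr (-5/4) / 4"
          and q = "\<lambda>v. a v powr (1/4)",
          OF \<open>\<epsilon> > 0\<close> amp(1) amp(2)[folded p''_def] amp(3) \<theta>'[OF u] amp(4,5)]
      unfolding Y_def Z_def p''_def by simp
  qed
  have "a t * (y t - c * Y t)\<^sup>2 + \<epsilon> * (y' t - c * Z t)\<^sup>2
        \<le> \<rho>\<^sup>2 / \<epsilon> * (t - s) * exp ((B1 / m + 1) * (t - s))"
  proof (rule forced_oscillator_energy_bound[where e = "\<lambda>v. y v - c * Y v"
        and e' = "\<lambda>v. y' v - c * Z v" and R = "\<lambda>v. c * (\<epsilon> * sqrt \<epsilon> * p'' v * sin (\<theta> v))",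
        OF \<open>\<epsilon> > 0\<close> \<open>m > 0\<close> \<open>s \<le> t\<close> a' _ _ a_ge a'_le])
    fix u assume u: "u \<in> {s..t}"
    show "((\<lambda>v. y v - c * Y v) has_real_derivative y' u - c * Z u) (at u within {s..t})"
      using y'[OF u] ansatz[OF u] by (auto intro!: derivative_eq_intros)
    show "((\<lambda>v. y' v - c * Z v) has_real_derivative
            - (a u * (y u - c * Y u) + c * (\<epsilon> * sqrt \<epsilon> * p'' u * sin (\<theta> u))) / \<epsilon>)
          (at u within {s..t})"
      using y''[OF u] ansatz[OF u] \<open>\<epsilon> > 0\<close>
      by (auto intro!: derivative_eq_intros simp: field_simps)
    have "\<bar>p'' u\<bar> \<le> amplitude_deriv2_bound m B1 B2"
      unfolding p''_def using quarter_power_amplitude_bounds(3) \<open>m > 0\<close> a_ge a'_le a''_le u by blast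
    moreover have "\<bar>p'' u\<bar> * \<bar>sin (\<theta> u)\<bar> \<le> \<bar>p'' u\<bar>" by (simp add: mult_left_le abs_sin_le_one)
    ultimately have "\<bar>p'' u * sin (\<theta> u)\<bar> \<le> amplitude_deriv2_bound m B1 B2" by (simp add: abs_mult)
    then have "\<epsilon> * sqrt \<epsilon> * \<bar>c\<bar> * \<bar>p'' u * sin (\<theta> u)\<bar> \<le> \<rho>"
      unfolding \<rho>_def using \<open>\<epsilon> > 0\<close> by (simp add: mult_left_mono)
    then show "\<bar>c * (\<epsilon> * sqrt \<epsilon> * p'' u * sin (\<theta> u))\<bar> \<le> \<rho>"
      using \<open>\<epsilon> > 0\<close> by (simp add: abs_mult mult_ac)
  next
    have "a s > 0" using a_ge[of s] \<open>s \<le> t\<close> \<open>m > 0\<close> by force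
    then have "a s powr (-1/4) * a s powr (1/4) = 1" by (simp flip: powr_add)
    then show "y s - c * Y s = 0" "y' s - c * Z s = 0"
      unfolding c_def Y_def Z_def using \<open>\<theta> s = 0\<close> \<open>y s = 0\<close> \<open>y' s = \<xi>\<close> by (simp_all add: mult.assoc)
  qed
  also have "\<rho>\<^sup>2 / \<epsilon> = (\<epsilon> * \<bar>c\<bar> * amplitude_deriv2_bound m B1 B2)\<^sup>2"
    unfolding \<rho>_def using \<open>\<epsilon> > 0\<close> by (simp add: power_mult_distrib power2_eq_square)
  finally show ?thesis .
qed

lemma energy_bound_components:
  fixes \<epsilon> m a e e' M :: real
  assumes "\<epsilon> > 0" and "m > 0" and "m \<le> a" and "M \<ge> 0"
    and energy: "a * e\<^sup>2 + \<epsilon> * e'\<^sup>2 \<le> (\<epsilon> * M)\<^sup>2"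
  shows "\<bar>e\<bar> \<le> \<epsilon> * M / sqrt m" and "\<bar>e'\<bar> \<le> sqrt \<epsilon> * M"
proof -
  have "m * e\<^sup>2 \<le> a * e\<^sup>2" using \<open>m \<le> a\<close> by (simp add: mult_right_mono)
  with energy \<open>\<epsilon> > 0\<close> have "m * e\<^sup>2 \<le> (\<epsilon> * M)\<^sup>2" by (smt (verit) mult_nonneg_nonneg zero_le_power2)
  then have "e\<^sup>2 \<le> (\<epsilon> * M / sqrt m)\<^sup>2"
    using \<open>m > 0\<close> by (simp add: power_divide field_simps)
  then show "\<bar>e\<bar> \<le> \<epsilon> * M / sqrt m"
    using \<open>\<epsilon> > 0\<close> \<open>m > 0\<close> \<open>M \<ge> 0\<close> by (simp add: abs_le_square_iff[symmetric])
  have "0 \<le> a * e\<^sup>2" using \<open>m > 0\<close> \<open>m \<le> a\<close> by simp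
  moreover have "(\<epsilon> * M)\<^sup>2 = \<epsilon> * (\<epsilon> * M\<^sup>2)" by (simp add: power2_eq_square)
  ultimately have "\<epsilon> * e'\<^sup>2 \<le> \<epsilon> * (\<epsilon> * M\<^sup>2)" using energy by linarith
  then have "e'\<^sup>2 \<le> (sqrt \<epsilon> * M)\<^sup>2"
    using \<open>\<epsilon> > 0\<close> by (simp add: power_mult_distrib)
  then show "\<bar>e'\<bar> \<le> sqrt \<epsilon> * M"
    using \<open>\<epsilon> > 0\<close> \<open>M \<ge> 0\<close> by (simp add: abs_le_square_iff[symmetric])
qed

(* P0 (P2 S (1 + 1/sqrt m) + P1), where P0, P1, P2 bound the amplitude a^(-1/4) and its first
   two derivatives and S^2 = D exp((B1/m + 1) D) is the Gronwall factor of the energy estimate. *)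
definition wkb_error_const :: "real \<Rightarrow> real \<Rightarrow> real \<Rightarrow> real \<Rightarrow> real" where
  "wkb_error_const m B1 B2 D = m powr (-1/4) *
     (amplitude_deriv2_bound m B1 B2 * sqrt (D * exp ((B1 / m + 1) * D)) * (1 + 1 / sqrt m)
      + B1 * m powr (-5/4) / 4)"

lemma wkb_approximation:
  fixes a a' a'' \<theta> y y' :: "real \<Rightarrow> real"
  assumes "\<epsilon> > 0" and "m > 0" and "s \<le> t" and "t - s \<le> D"
    and a': "\<And>u. u \<in> {s..t} \<Longrightarrow> (a has_real_derivative a' u) (at u within {s..t})"
    and a'': "\<And>u. u \<in> {s..t} \<Longrightarrow> (a' has_real_derivative a'' u) (at u within {s..t})"
    and \<theta>': "\<And>u. u \<in> {s..t} \<Longrightarrow> (\<theta> has_real_derivative sqrt (a u) / sqrt \<epsilon>) (at u within {s..t})"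
    and y': "\<And>u. u \<in> {s..t} \<Longrightarrow> (y has_real_derivative y' u) (at u within {s..t})"
    and y'': "\<And>u. u \<in> {s..t} \<Longrightarrow> (y' has_real_derivative - a u * y u / \<epsilon>) (at u within {s..t})"
    and a_ge: "\<And>u. u \<in> {s..t} \<Longrightarrow> m \<le> a u"
    and a'_le: "\<And>u. u \<in> {s..t} \<Longrightarrow> \<bar>a' u\<bar> \<le> B1"
    and a''_le: "\<And>u. u \<in> {s..t} \<Longrightarrow> \<bar>a'' u\<bar> \<le> B2"
    and "\<theta> s = 0" and "y s = 0" and "y' s = \<xi>"
  shows "\<bar>y t - sqrt \<epsilon> * a t powr (-1/4) * a s powr (-1/4) * sin (\<theta> t) * \<xi>\<bar>
           \<le> wkb_error_const m B1 B2 D * \<bar>\<xi>\<bar> * \<epsilon>"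
    and "\<bar>y' t - a t powr (1/4) * a s powr (-1/4) * cos (\<theta> t) * \<xi>\<bar>
           \<le> wkb_error_const m B1 B2 D * \<bar>\<xi>\<bar> * sqrt \<epsilon>"
proof -
  have s: "s \<in> {s..t}" and t: "t \<in> {s..t}" using \<open>s \<le> t\<close> by auto
  define c where "c = \<xi> * a s powr (-1/4)"
  define p' where "p' = - a' t * a t powr (-5/4) / 4"
  define e where "e = y t - c * (sqrt \<epsilon> * a t powr (-1/4) * sin (\<theta> t))"
  define e' where "e' = y' t - c * (sqrt \<epsilon> * p' * sin (\<theta> t) + a t powr (1/4) * cos (\<theta> t))"
  define L where "L = B1 / m + 1"
  define P0 where "P0 = m powr (-1/4)"
  define P1 where "P1 = B1 * m powr (-5/4) / 4"
  define P2 where "P2 = amplitude_deriv2_bound m B1 B2"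
  define S where "S = sqrt (D * exp (L * D))"
  have "B1 \<ge> 0" "B2 \<ge> 0" "D \<ge> 0"
    using a'_le[OF s] a''_le[OF s] \<open>s \<le> t\<close> \<open>t - s \<le> D\<close> by linarith+
  then have "L \<ge> 0" "P0 > 0" "P1 \<ge> 0" "P2 \<ge> 0" "S \<ge> 0"
    unfolding L_def P0_def P1_def P2_def amplitude_deriv2_bound_def S_def
    using \<open>m > 0\<close> by simp_all
  have c: "\<bar>c\<bar> \<le> \<bar>\<xi>\<bar> * P0"
    unfolding c_def P0_def
    using quarter_power_amplitude_bounds(1)[OF \<open>m > 0\<close> a_ge[OF s] a'_le[OF s] a''_le[OF s]]
    by (simp add: abs_mult mult_left_mono)
  have p': "\<bar>p'\<bar> \<le> P1"
    unfolding p'_def P1_def using quarter_power_amplitude_bounds(2) \<open>m > 0\<close> a_ge a'_le t by blast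
  have "a t * e\<^sup>2 + \<epsilon> * e'\<^sup>2 \<le> (\<epsilon> * \<bar>c\<bar> * P2)\<^sup>2 * (t - s) * exp (L * (t - s))"
    unfolding e_def e'_def c_def p'_def P2_def L_def
    by (rule wkb_error_energy_bound[OF assms(1-3) a' a'' \<theta>' y' y'' a_ge a'_le a''_le assms(13-15)])
  also have "\<dots> \<le> (\<epsilon> * \<bar>c\<bar> * P2)\<^sup>2 * D * exp (L * D)"
    using \<open>s \<le> t\<close> \<open>t - s \<le> D\<close> \<open>L \<ge> 0\<close>
    by (intro mult_left_mono mult_mono) (auto simp: mult_left_mono)
  also have "\<dots> = (\<epsilon> * (\<bar>c\<bar> * P2 * S))\<^sup>2"
    unfolding S_def using \<open>s \<le> t\<close> \<open>t - s \<le> D\<close> by (simp add: power_mult_distrib)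
  finally have energy: "a t * e\<^sup>2 + \<epsilon> * e'\<^sup>2 \<le> (\<epsilon> * (\<bar>c\<bar> * P2 * S))\<^sup>2" .
  note components = energy_bound_components[OF \<open>\<epsilon> > 0\<close> \<open>m > 0\<close> a_ge[OF t] _ energy]
  define Q where "Q = \<bar>\<xi>\<bar> * P0 * P2 * S"
  have "Q \<ge> 0" "\<bar>\<xi>\<bar> * P0 * P1 \<ge> 0"
    unfolding Q_def using \<open>P0 > 0\<close> \<open>P1 \<ge> 0\<close> \<open>P2 \<ge> 0\<close> \<open>S \<ge> 0\<close> by simp_all
  have cPS: "\<bar>c\<bar> * P2 * S \<le> Q"
    unfolding Q_def using c \<open>P2 \<ge> 0\<close> \<open>S \<ge> 0\<close> by (intro mult_right_mono) auto
  have K: "wkb_error_const m B1 B2 D * \<bar>\<xi>\<bar> = Q + Q / sqrt m + \<bar>\<xi>\<bar> * P0 * P1"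
    unfolding wkb_error_const_def Q_def P0_def P1_def P2_def S_def L_def
    using \<open>m > 0\<close> by (simp add: field_simps)
  have "\<bar>e\<bar> \<le> \<epsilon> * (\<bar>c\<bar> * P2 * S) / sqrt m" by (rule components(1)) (use \<open>P2 \<ge> 0\<close> \<open>S \<ge> 0\<close> in simp)
  also have "\<dots> \<le> \<epsilon> * Q / sqrt m"
    using cPS \<open>\<epsilon> > 0\<close> \<open>m > 0\<close> by (intro divide_right_mono mult_left_mono) auto
  also have "\<dots> = \<epsilon> * (Q / sqrt m)" by simp
  also have "\<dots> \<le> \<epsilon> * (wkb_error_const m B1 B2 D * \<bar>\<xi>\<bar>)"
    unfolding K using \<open>\<epsilon> > 0\<close> \<open>Q \<ge> 0\<close> \<open>\<bar>\<xi>\<bar> * P0 * P1 \<ge> 0\<close> by (intro mult_left_mono) auto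
  finally show "\<bar>y t - sqrt \<epsilon> * a t powr (-1/4) * a s powr (-1/4) * sin (\<theta> t) * \<xi>\<bar>
           \<le> wkb_error_const m B1 B2 D * \<bar>\<xi>\<bar> * \<epsilon>"
    unfolding e_def c_def by (simp add: algebra_simps)
  have "\<bar>y' t - a t powr (1/4) * a s powr (-1/4) * cos (\<theta> t) * \<xi>\<bar>
      = \<bar>e' + sqrt \<epsilon> * (c * p' * sin (\<theta> t))\<bar>"
    unfolding e'_def c_def by (simp add: algebra_simps)
  also have "\<dots> \<le> \<bar>e'\<bar> + \<bar>sqrt \<epsilon> * (c * p' * sin (\<theta> t))\<bar>" by (rule abs_triangle_ineq)
  also have "\<dots> = \<bar>e'\<bar> + sqrt \<epsilon> * \<bar>c * p' * sin (\<theta> t)\<bar>"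
    using \<open>\<epsilon> > 0\<close> by (simp add: abs_mult)
  also have "\<dots> \<le> sqrt \<epsilon> * Q + sqrt \<epsilon> * (\<bar>\<xi>\<bar> * P0 * P1)"
  proof (rule add_mono)
    have "\<bar>e'\<bar> \<le> sqrt \<epsilon> * (\<bar>c\<bar> * P2 * S)" by (rule components(2)) (use \<open>P2 \<ge> 0\<close> \<open>S \<ge> 0\<close> in simp)
    then show "\<bar>e'\<bar> \<le> sqrt \<epsilon> * Q"
      using cPS by (meson mult_left_mono order_trans real_sqrt_ge_zero less_imp_le \<open>\<epsilon> > 0\<close>)
    have "\<bar>c * p' * sin (\<theta> t)\<bar> \<le> \<bar>\<xi>\<bar> * P0 * P1 * 1"
      unfolding abs_mult using c p' abs_sin_le_one \<open>P1 \<ge> 0\<close>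
      by (intro mult_mono) auto
    then show "sqrt \<epsilon> * \<bar>c * p' * sin (\<theta> t)\<bar> \<le> sqrt \<epsilon> * (\<bar>\<xi>\<bar> * P0 * P1)"
      using \<open>\<epsilon> > 0\<close> by (simp add: mult_left_mono)
  qed
  also have "\<dots> \<le> sqrt \<epsilon> * (wkb_error_const m B1 B2 D * \<bar>\<xi>\<bar>)"
    unfolding K distrib_left[symmetric] using \<open>\<epsilon> > 0\<close> \<open>Q \<ge> 0\<close> \<open>m > 0\<close>
    by (intro mult_left_mono) auto
  finally show "\<bar>y' t - a t powr (1/4) * a s powr (-1/4) * cos (\<theta> t) * \<xi>\<bar>
           \<le> wkb_error_const m B1 B2 D * \<bar>\<xi>\<bar> * sqrt \<epsilon>"
    by (simp add: mult_ac)
qed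

lemma curve_comp_has_second_derivative:
  fixes A :: "'a::real_normed_vector \<Rightarrow> real" and \<gamma> \<gamma>' \<gamma>'' :: "real \<Rightarrow> 'a"
  assumes A_deriv: "\<And>x. (A has_derivative blinfun_apply (dA x)) (at x)"
    and dA_deriv: "\<And>x. (dA has_derivative blinfun_apply (d2A x)) (at x)"
    and \<gamma>_deriv: "(\<gamma> has_vector_derivative \<gamma>' u) (at u within S)"
    and \<gamma>'_deriv: "(\<gamma>' has_vector_derivative \<gamma>'' u) (at u within S)"
  shows "((\<lambda>v. A (\<gamma> v)) has_real_derivative dA (\<gamma> u) (\<gamma>' u)) (at u within S)"
    and "((\<lambda>v. dA (\<gamma> v) (\<gamma>' v)) has_real_derivative d2A (\<gamma> u) (\<gamma>' u) (\<gamma>' u) + dA (\<gamma> u) (\<gamma>'' u))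
           (at u within S)"
proof -
  have "((A \<circ> \<gamma>) has_vector_derivative dA (\<gamma> u) (\<gamma>' u)) (at u within S)"
    by (rule vector_derivative_diff_chain_within[OF \<gamma>_deriv has_derivative_at_withinI[OF A_deriv]])
  then show "((\<lambda>v. A (\<gamma> v)) has_real_derivative dA (\<gamma> u) (\<gamma>' u)) (at u within S)"
    by (simp add: has_real_derivative_iff_has_vector_derivative o_def)
  have "((dA \<circ> \<gamma>) has_vector_derivative d2A (\<gamma> u) (\<gamma>' u)) (at u within S)"
    by (rule vector_derivative_diff_chain_within[OF \<gamma>_deriv has_derivative_at_withinI[OF dA_deriv]])
  from blinfun.has_vector_derivative[OF this \<gamma>'_deriv]
  show "((\<lambda>v. dA (\<gamma> v) (\<gamma>' v)) has_real_derivative d2A (\<gamma> u) (\<gamma>' u) (\<gamma>' u) + dA (\<gamma> u) (\<gamma>'' u))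
           (at u within S)"
    by (simp add: has_real_derivative_iff_has_vector_derivative o_def add.commute)
qed

lemma curve_comp_second_derivative_bounds:
  fixes dA :: "'a::real_normed_vector \<Rightarrow> 'a \<Rightarrow>\<^sub>L real"
    and d2A :: "'a \<Rightarrow> 'a \<Rightarrow>\<^sub>L 'a \<Rightarrow>\<^sub>L real"
  assumes "norm (dA x) \<le> D1" and "norm (d2A x) \<le> D2" and "norm v \<le> C" and "norm w \<le> C"
  shows "\<bar>dA x v\<bar> \<le> D1 * C" and "\<bar>d2A x v v + dA x w\<bar> \<le> D2 * C * C + D1 * C"
proof -
  have "0 \<le> D1" "0 \<le> D2" using assms(1,2) norm_ge_zero order_trans by blast+
  have dA_le: "\<bar>dA x z\<bar> \<le> D1 * C" if "norm z \<le> C" for z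
  proof -
    have "norm (dA x z) \<le> norm (dA x) * norm z" by (rule norm_blinfun)
    also have "\<dots> \<le> D1 * C" by (rule mult_mono[OF assms(1) that \<open>0 \<le> D1\<close> norm_ge_zero])
    finally show ?thesis by simp
  qed
  then show "\<bar>dA x v\<bar> \<le> D1 * C" using assms(3) .
  have "\<bar>d2A x v v\<bar> \<le> norm (d2A x) * norm v * norm v"
    using norm_blinfun[of "d2A x v" v] norm_blinfun[of "d2A x" v]
    by (simp add: order_trans mult_right_mono)
  also have "\<dots> \<le> D2 * C * C"
    using assms(2,3) \<open>0 \<le> D2\<close> order_trans[OF norm_ge_zero assms(3)] by (intro mult_mono) auto
  finally show "\<bar>d2A x v v + dA x w\<bar> \<le> D2 * C * C + D1 * C"
    using dA_le[OF assms(4)] by linarith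
qed

lemma bounded_on_norm_ball_if_differentiable:
  fixes f :: "'a::euclidean_space \<Rightarrow> 'b::real_normed_vector"
  assumes "\<And>x. (f has_derivative f' x) (at x)"
  obtains B where "\<And>x. norm x \<le> C \<Longrightarrow> norm (f x) \<le> B"
proof -
  have "continuous_on (cball 0 C) f"
    using assms by (meson continuous_at_imp_continuous_on has_derivative_continuous)
  then have "bounded (f ` cball 0 C)" by (intro compact_imp_bounded compact_continuous_image) auto
  then obtain B where "\<forall>x\<in>cball 0 C. norm (f x) \<le> B" by (auto simp: bounded_iff)
  then show ?thesis using that mem_cball_0 by blast
qed

lemma wkb_along_trajectory:
  fixes A :: "'a::euclidean_space \<Rightarrow> real" and r r' r'' :: "real \<Rightarrow> 'a" and y y' :: "real \<Rightarrow> real"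
  assumes "\<epsilon> > 0" and "C > 0" and "0 \<le> s" and "s \<le> t" and "t \<le> tf"
    and A_deriv: "\<And>x. (A has_derivative blinfun_apply (dA x)) (at x)"
    and dA_deriv: "\<And>x. (dA has_derivative blinfun_apply (d2A x)) (at x)"
    and dA_le: "\<And>x. norm x \<le> C \<Longrightarrow> norm (dA x) \<le> D1"
    and d2A_le: "\<And>x. norm x \<le> C \<Longrightarrow> norm (d2A x) \<le> D2"
    and A_ge: "\<And>x. 1 / C \<le> A x"
    and r_deriv: "\<And>u. u \<in> {0..tf} \<Longrightarrow> (r has_vector_derivative r' u) (at u within {0..tf})"
    and r'_deriv: "\<And>u. u \<in> {0..tf} \<Longrightarrow> (r' has_vector_derivative r'' u) (at u within {0..tf})"
    and r_le: "\<And>u. u \<in> {0..tf} \<Longrightarrow> norm (r u) \<le> C \<and> norm (r' u) \<le> C \<and> norm (r'' u) \<le> C"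
    and y': "\<And>u. u \<in> {s..tf} \<Longrightarrow> (y has_real_derivative y' u) (at u within {s..tf})"
    and y'': "\<And>u. u \<in> {s..tf} \<Longrightarrow> (y' has_real_derivative - A (r u) * y u / \<epsilon>) (at u within {s..tf})"
    and "y s = 0" and "y' s = \<xi>"
  defines "k \<equiv> \<lambda>u. sqrt (A (r u))" and "\<kappa> \<equiv> \<lambda>u. integral {0..u} (\<lambda>v. sqrt (A (r v)))"
    and "K \<equiv> wkb_error_const (1 / C) (D1 * C) (D2 * C * C + D1 * C) tf"
  shows "\<bar>y t - sqrt \<epsilon> * k t powr (-1/2) * k s powr (-1/2) * sin ((\<kappa> t - \<kappa> s) / sqrt \<epsilon>) * \<xi>\<bar>
           \<le> K * \<bar>\<xi>\<bar> * \<epsilon> \<and>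
         \<bar>y' t - k t powr (1/2) * k s powr (-1/2) * cos ((\<kappa> t - \<kappa> s) / sqrt \<epsilon>) * \<xi>\<bar>
           \<le> K * \<bar>\<xi>\<bar> * sqrt \<epsilon>"
proof -
  define a where "a u = A (r u)" for u
  define a' where "a' u = dA (r u) (r' u)" for u
  define a'' where "a'' u = d2A (r u) (r' u) (r' u) + dA (r u) (r'' u)" for u
  define \<theta> where "\<theta> u = (\<kappa> u - \<kappa> s) / sqrt \<epsilon>" for u
  have sub: "{s..t} \<subseteq> {0..tf}" "{s..t} \<subseteq> {s..tf}" using assms(3-5) by auto
  have a_deriv: "(a has_real_derivative a' u) (at u within {0..tf})"
    "(a' has_real_derivative a'' u) (at u within {0..tf})" if "u \<in> {0..tf}" for u
    unfolding a_def[abs_def] a'_def[abs_def] a''_def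
    using curve_comp_has_second_derivative[where \<gamma> = r and \<gamma>' = r' and \<gamma>'' = r'' and u = u,
        OF A_deriv dA_deriv r_deriv[OF that] r'_deriv[OF that]] by auto
  have a_bounds: "1 / C \<le> a u" "\<bar>a' u\<bar> \<le> D1 * C" "\<bar>a'' u\<bar> \<le> D2 * C * C + D1 * C"
    if "u \<in> {0..tf}" for u
    unfolding a_def a'_def a''_def using A_ge r_le[OF that]
      curve_comp_second_derivative_bounds[OF dA_le d2A_le,
        where x = "r u" and v = "r' u" and w = "r'' u"]
    by auto
  have "continuous_on {0..tf} a" by (rule DERIV_continuous_on[OF a_deriv(1)])
  then have "continuous_on {0..tf} k" unfolding k_def a_def[symmetric] by (intro continuous_intros)
  then have \<kappa>': "(\<kappa> has_real_derivative k u) (at u within {0..tf})" if "u \<in> {0..tf}" for u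
    using integral_has_vector_derivative[OF _ that]
    unfolding \<kappa>_def k_def has_real_derivative_iff_has_vector_derivative by blast
  have derivs: "(a has_real_derivative a' u) (at u within {s..t})"
    "(a' has_real_derivative a'' u) (at u within {s..t})"
    "(\<theta> has_real_derivative sqrt (a u) / sqrt \<epsilon>) (at u within {s..t})"
    "(y has_real_derivative y' u) (at u within {s..t})"
    "(y' has_real_derivative - a u * y u / \<epsilon>) (at u within {s..t})"
    if "u \<in> {s..t}" for u
  proof -
    have u0: "u \<in> {0..tf}" and us: "u \<in> {s..tf}" using that sub by auto
    show "(a has_real_derivative a' u) (at u within {s..t})"
      "(a' has_real_derivative a'' u) (at u within {s..t})"
      using DERIV_subset[OF a_deriv(1)[OF u0] sub(1)] DERIV_subset[OF a_deriv(2)[OF u0] sub(1)] .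
    show "(\<theta> has_real_derivative sqrt (a u) / sqrt \<epsilon>) (at u within {s..t})"
      unfolding \<theta>_def[abs_def]
      using DERIV_cdivide[OF DERIV_diff[OF DERIV_subset[OF \<kappa>'[OF u0] sub(1)] DERIV_const[of "\<kappa> s"]],
          where c = "sqrt \<epsilon>"]
      by (simp add: k_def a_def)
    show "(y has_real_derivative y' u) (at u within {s..t})"
      "(y' has_real_derivative - a u * y u / \<epsilon>) (at u within {s..t})"
      using DERIV_subset[OF y'[OF us] sub(2)] DERIV_subset[OF y''[OF us] sub(2)] unfolding a_def .
  qed
  have "1 / C > 0" "t - s \<le> tf" "\<theta> s = 0" using assms(2-5) by (simp_all add: \<theta>_def)
  note wkb = wkb_approximation[OF \<open>\<epsilon> > 0\<close> \<open>1 / C > 0\<close> \<open>s \<le> t\<close> \<open>t - s \<le> tf\<close> derivs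
      a_bounds[OF subsetD[OF sub(1)]] \<open>\<theta> s = 0\<close> \<open>y s = 0\<close> \<open>y' s = \<xi>\<close>]
  have "k u powr q = a u powr (q / 2)" for u q
  proof -
    have "0 \<le> A (r u)"
      using A_ge[of "r u"] \<open>C > 0\<close> by (meson less_le_trans less_imp_le zero_less_divide_1_iff)
    then show ?thesis unfolding k_def a_def by (simp add: powr_half_sqrt[symmetric] powr_powr)
  qed
  then show ?thesis using wkb unfolding \<theta>_def K_def by simp
qed

theorem lemma4p1:
  fixes A :: "'a::euclidean_space \<Rightarrow> real" and C tf \<xi>0 :: real
    and r r1 r2 r3 :: "real \<Rightarrow> real \<Rightarrow> 'a"
    and y y' :: "real \<Rightarrow> real \<Rightarrow> real \<Rightarrow> real"
  assumes tf: "tf > 0" and Cpos: "C > 0"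
    and A_C3: "C3 A" and A_pos: "\<forall>x. A x > 0" and A_lb: "\<forall>x. A x \<ge> 1 / C"
    and r_deriv: "\<forall>\<epsilon>>0. \<forall>t\<in>{0..tf}.
         (r \<epsilon> has_vector_derivative r1 \<epsilon> t) (at t within {0..tf}) \<and>
         (r1 \<epsilon> has_vector_derivative r2 \<epsilon> t) (at t within {0..tf}) \<and>
         (r2 \<epsilon> has_vector_derivative r3 \<epsilon> t) (at t within {0..tf})"
    and r3_cont: "\<forall>\<epsilon>>0. continuous_on {0..tf} (r3 \<epsilon>)"
    and r_bnd: "\<forall>\<epsilon>>0. \<forall>t\<in>{0..tf}.
         norm (r \<epsilon> t) \<le> C \<and> norm (r1 \<epsilon> t) \<le> C \<and> norm (r2 \<epsilon> t) \<le> C"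
    and y_ode: "\<forall>\<epsilon>>0. \<forall>s\<in>{0..tf}. y \<epsilon> s s = 0 \<and> y' \<epsilon> s s = \<xi>0 \<and>
         (\<forall>t\<in>{s..tf}.
            (y \<epsilon> s has_real_derivative y' \<epsilon> s t) (at t within {s..tf}) \<and>
            (y' \<epsilon> s has_real_derivative (- A (r \<epsilon> t) * y \<epsilon> s t / \<epsilon>)) (at t within {s..tf}))"
  shows "\<exists>K \<epsilon>0. \<epsilon>0 > 0 \<and> (\<forall>\<epsilon>. 0 < \<epsilon> \<and> \<epsilon> < \<epsilon>0 \<longrightarrow> (\<forall>s t. 0 \<le> s \<and> s \<le> t \<and> t \<le> tf \<longrightarrow>
      \<bar>y \<epsilon> s t - sqrt \<epsilon> * kfun A r \<epsilon> t powr (-1/2) * kfun A r \<epsilon> s powr (-1/2)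
          * sin ((kappa A r \<epsilon> t - kappa A r \<epsilon> s) / sqrt \<epsilon>) * \<xi>0\<bar> \<le> K * \<epsilon> \<and>
      \<bar>y' \<epsilon> s t - kfun A r \<epsilon> t powr (1/2) * kfun A r \<epsilon> s powr (-1/2)
          * cos ((kappa A r \<epsilon> t - kappa A r \<epsilon> s) / sqrt \<epsilon>) * \<xi>0\<bar> \<le> K * sqrt \<epsilon>))"
proof -
  obtain f1 f2 f3 where A': "\<forall>x. (A has_derivative blinfun_apply (f1 x)) (at x)"
    and f1': "\<forall>x. (f1 has_derivative blinfun_apply (f2 x)) (at x)"
    and f2': "\<forall>x. (f2 has_derivative blinfun_apply (f3 x)) (at x)"
    using A_C3 unfolding C3_def by blast
  obtain D1 where D1: "\<And>x. norm x \<le> C \<Longrightarrow> norm (f1 x) \<le> D1"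
    using bounded_on_norm_ball_if_differentiable[OF f1'[rule_format]] by blast
  obtain D2 where D2: "\<And>x. norm x \<le> C \<Longrightarrow> norm (f2 x) \<le> D2"
    using bounded_on_norm_ball_if_differentiable[OF f2'[rule_format]] by blast
  define K where "K = wkb_error_const (1 / C) (D1 * C) (D2 * C * C + D1 * C) tf * \<bar>\<xi>0\<bar>"
  have kfun: "kfun A r \<epsilon> = (\<lambda>u. sqrt (A (r \<epsilon> u)))" for \<epsilon> by (simp add: kfun_def fun_eq_iff)
  have "\<bar>y \<epsilon> s t - sqrt \<epsilon> * kfun A r \<epsilon> t powr (-1/2) * kfun A r \<epsilon> s powr (-1/2)
          * sin ((kappa A r \<epsilon> t - kappa A r \<epsilon> s) / sqrt \<epsilon>) * \<xi>0\<bar> \<le> K * \<epsilon> \<and>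
      \<bar>y' \<epsilon> s t - kfun A r \<epsilon> t powr (1/2) * kfun A r \<epsilon> s powr (-1/2)
          * cos ((kappa A r \<epsilon> t - kappa A r \<epsilon> s) / sqrt \<epsilon>) * \<xi>0\<bar> \<le> K * sqrt \<epsilon>"
    if "0 < \<epsilon>" "0 \<le> s" "s \<le> t" "t \<le> tf" for \<epsilon> s t
    unfolding kappa_def kfun K_def
    using that Cpos A' f1' D1 D2 A_lb r_deriv r_bnd y_ode
    by (intro wkb_along_trajectory[where r = "r \<epsilon>" and r' = "r1 \<epsilon>" and r'' = "r2 \<epsilon>"
          and y = "y \<epsilon> s" and y' = "y' \<epsilon> s" and dA = f1 and d2A = f2]) auto
  then show ?thesis by (intro exI[of _ K] exI[of _ 1]) auto
qed

end
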